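(* The module $\mathbb W_1^{\otimes m}$ is generated by its degree-zero part $V^{\otimes m}$ as a $U(\mathfrak p)$-module.
   Context: Fix integers $\ell>1$, $n\ge m\ge1$; $\lceil i/n\rceil$ is the block index of $1\le i\le n\ell$. $E_{ij}$ are matrix units of $\mathfrak{gl}(n\ell)$; $\mathfrak p\subset\mathfrak{gl}(n\ell)\otimes\mathbb C[z]$ is the Lie subalgebra spanned by the $E_{ij}\otimes z^k$ ($k\ge0$) with $\lceil i/n\rceil-\lceil j/n\rceil+k\equiv0\pmod\ell$. Let $V=\mathbb C^{n\ell}$ and $\mathbb W_1=V\otimes\mathbb C[z]$ (graded by $z$-degree) with the natural action of $\mathfrak{gl}(n\ell)\otimes\mathbb C[z]$ ($(\xi\otimes z^k)(v\otimes z^r)=\xi v\otimes z^{k+r}$); $\mathfrak p$ acts on $\mathbb W_1^{\otimes m}$ diagonally by restriction. *)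

theory Defs
  imports Complex_Main
begin

text \<open>Block index of 1 \<le> i \<le> n*l : ceiling (i/n).\<close>
definition blk :: "nat \<Rightarrow> nat \<Rightarrow> int" where
  "blk n i = \<lceil>real i / real n\<rceil>"

text \<open>An element of gl(n l) \<otimes> C[z] is given by its coordinates X i j k
  w.r.t. the basis E_ij \<otimes> z^k (1 \<le> i,j \<le> n l, k \<ge> 0), finitely supported.\<close>
definition loop_gl :: "nat \<Rightarrow> nat \<Rightarrow> (nat \<Rightarrow> nat \<Rightarrow> nat \<Rightarrow> complex) set" where
  "loop_gl n l = {X. finite {(i,j,k). X i j k \<noteq> 0} \<and>
      (\<forall>i j k. X i j k \<noteq> 0 \<longrightarrow> i \<in> {1..n*l} \<and> j \<in> {1..n*l})}"

definition palg :: "nat \<Rightarrow> nat \<Rightarrow> (nat \<Rightarrow> nat \<Rightarrow> nat \<Rightarrow> complex) set" where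
  "palg n l = {X \<in> loop_gl n l. \<forall>i j k. X i j k \<noteq> 0 \<longrightarrow>
      (blk n i - blk n j + int k) mod int l = 0}"

text \<open>Basis of W_1^{\<otimes> m}: pairs (is, rs) of index list and degree list, both of
  length m, with e_{is!0} z^{rs!0} \<otimes> ... \<otimes> e_{is!(m-1)} z^{rs!(m-1)}.\<close>
definition valid_idx :: "nat \<Rightarrow> nat \<Rightarrow> nat \<Rightarrow> nat list \<times> nat list \<Rightarrow> bool" where
  "valid_idx n l m x \<longleftrightarrow> length (fst x) = m \<and> length (snd x) = m \<and>
      set (fst x) \<subseteq> {1..n*l}"

definition Wtens :: "nat \<Rightarrow> nat \<Rightarrow> nat \<Rightarrow> (nat list \<times> nat list \<Rightarrow> complex) set" where
  "Wtens n l m = {f. finite {x. f x \<noteq> 0} \<and> (\<forall>x. f x \<noteq> 0 \<longrightarrow> valid_idx n l m x)}"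

definition Vtens :: "nat \<Rightarrow> nat \<Rightarrow> nat \<Rightarrow> (nat list \<times> nat list \<Rightarrow> complex) set" where
  "Vtens n l m = {f \<in> Wtens n l m. \<forall>x. f x \<noteq> 0 \<longrightarrow> snd x = replicate m 0}"

text \<open>Diagonal action: (E_ij z^k)(e_a z^r) = delta_ja e_i z^(k+r), extended to each
  tensor factor and summed. Coefficient of basis vector (is, rs) in X.f.\<close>
definition act :: "nat \<Rightarrow> nat \<Rightarrow> nat \<Rightarrow> (nat \<Rightarrow> nat \<Rightarrow> nat \<Rightarrow> complex)
     \<Rightarrow> (nat list \<times> nat list \<Rightarrow> complex) \<Rightarrow> (nat list \<times> nat list \<Rightarrow> complex)" where
  "act n l m X f = (\<lambda>(is, rs). if valid_idx n l m (is, rs) then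
      (\<Sum>p<m. \<Sum>j\<in>{1..n*l}. \<Sum>k\<in>{0..rs!p}.
          X (is!p) j k * f (is[p := j], rs[p := rs!p - k]))
    else 0)"

inductive_set gen_submod :: "nat \<Rightarrow> nat \<Rightarrow> nat \<Rightarrow> (nat list \<times> nat list \<Rightarrow> complex) set"
  for n l m where
  gen: "f \<in> Vtens n l m \<Longrightarrow> f \<in> gen_submod n l m"
| zero: "(\<lambda>_. 0) \<in> gen_submod n l m"
| add: "f \<in> gen_submod n l m \<Longrightarrow> g \<in> gen_submod n l m \<Longrightarrow> (\<lambda>x. f x + g x) \<in> gen_submod n l m"
| smult: "f \<in> gen_submod n l m \<Longrightarrow> (\<lambda>x. c * f x) \<in> gen_submod n l m"
| act: "X \<in> palg n l \<Longrightarrow> f \<in> gen_submod n l m \<Longrightarrow> act n l m X f \<in> gen_submod n l m"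

end

theory Submission
  imports Defs
begin

text \<open>Every basis tensor e(i1) z^r1 \<otimes> ... \<otimes> e(im) z^rm is reached from V^\<otimes>m by induction
  on its total degree. If r_p > 0, choose the block t with t = blk(i_p) + r_p (mod l) and an index j
  in that block different from the other m - 1 indices i_q; it exists because every block has
  n \<ge> m elements. Then E(i_p, j) \<otimes> z^r_p lies in p, and applied to the tensor whose p-th factor
  is replaced by e(j) z^0 it can act only on that factor, where it yields the given basis tensor.
  Finite linear combinations of basis tensors exhaust W_1^\<otimes>m.\<close>

definition tensor_basis :: "nat list \<times> nat list \<Rightarrow> nat list \<times> nat list \<Rightarrow> complex" where
  "tensor_basis x = (\<lambda>y. if y = x then 1 else 0)"

definition loop_unit :: "nat \<Rightarrow> nat \<Rightarrow> nat \<Rightarrow> nat \<Rightarrow> nat \<Rightarrow> nat \<Rightarrow> complex" where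
  "loop_unit i j r = (\<lambda>a b k. if a = i \<and> b = j \<and> k = r then 1 else 0)"

lemma blk_eq_of_in_block:
  assumes "n > 0" and "t \<ge> 1" and "(t - 1) * n < c" and "c \<le> t * n"
  shows "blk n c = int t"
proof -
  have "real ((t - 1) * n) < real c" "real c \<le> real (t * n)"
    using assms(3,4) by linarith+
  then have "(real t - 1) * real n < real c" "real c \<le> real t * real n"
    using assms(2) by (simp_all add: of_nat_diff)
  then have "real t - 1 < real c / real n" "real c / real n \<le> real t"
    using assms(1) by (simp_all add: field_simps)
  then show ?thesis unfolding blk_def by (simp add: ceiling_eq_iff)
qed

lemma exists_index_in_block_avoiding:
  assumes "n > 0" and "finite A" and "card A < n" and "1 \<le> t" and "t \<le> l"
  shows "\<exists>j \<in> {1..n*l}. j \<notin> A \<and> blk n j = int t"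
proof -
  define B where "B = {(t - 1) * n + 1..t * n}"
  obtain s where "t = Suc s" using assms(4) by (cases t) auto
  then have "card B = n" by (simp add: B_def)
  then have "\<not> B \<subseteq> A" using card_mono[OF assms(2), of B] assms(3) by linarith
  then obtain j where j: "j \<in> B" "j \<notin> A" by blast
  have "t * n \<le> n * l" using assms(5) by (metis mult.commute mult_le_mono1)
  with j(1) have "j \<in> {1..n*l}" unfolding B_def atLeastAtMost_iff by linarith
  moreover have "blk n j = int t"
    using j(1) assms by (intro blk_eq_of_in_block) (auto simp: B_def)
  ultimately show ?thesis using j(2) by blast
qed

lemma exists_residue_representative:
  assumes "l > 0"
  shows "\<exists>t. 1 \<le> t \<and> t \<le> l \<and> (a - int t) mod int l = 0"
proof -
  define t where "t = nat ((a - 1) mod int l + 1)"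
  have "0 \<le> (a - 1) mod int l" "(a - 1) mod int l < int l" using assms by simp_all
  then have "1 \<le> t" "t \<le> l" "int t = (a - 1) mod int l + 1" by (auto simp: t_def)
  moreover have "a - int t = int l * ((a - 1) div int l)"
    using \<open>int t = (a - 1) mod int l + 1\<close> by (simp add: minus_mod_eq_mult_div [symmetric])
  ultimately show ?thesis by auto
qed

lemma loop_unit_in_palg:
  assumes "i \<in> {1..n*l}" and "j \<in> {1..n*l}" and "(blk n i - blk n j + int r) mod int l = 0"
  shows "loop_unit i j r \<in> palg n l"
proof -
  have "{(a, b, k). loop_unit i j r a b k \<noteq> 0} = {(i, j, r)}"
    by (auto simp: loop_unit_def split: if_splits)
  then show ?thesis
    using assms by (auto simp: palg_def loop_gl_def loop_unit_def split: if_splits)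
qed

lemma sum_loop_unit_coeff:
  assumes "finite J" and "j \<in> J"
  shows "(\<Sum>b\<in>J. \<Sum>k\<in>{0..s}. loop_unit i j r a b k * g b k) = (if a = i \<and> r \<le> s then g j r else 0)"
proof -
  have "(\<Sum>k\<in>{0..s}. loop_unit i j r a b k * g b k)
      = (if b = j then \<Sum>k\<in>{0..s}. if k = r then if a = i then g j r else 0 else 0 else 0)" for b
    by (simp add: loop_unit_def if_distrib[of "\<lambda>x. x * _"] cong: if_cong)
  then show ?thesis using assms by simp
qed

lemma act_loop_unit_tensor_basis:
  assumes "valid_idx n l m (xs, rs)" and "j \<in> {1..n*l}"
  shows "act n l m (loop_unit i j r) (tensor_basis y) (xs, rs) =
    (\<Sum>q<m. if xs!q = i \<and> r \<le> rs!q \<and> y = (xs[q := j], rs[q := rs!q - r]) then 1 else 0)"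
  using assms by (auto simp: act_def sum_loop_unit_coeff tensor_basis_def intro!: sum.cong)

lemma list_update_cancel:
  assumes "xs[p := a] = ys[p := a]" and "xs!p = ys!p"
  shows "xs = ys"
  by (metis assms list_update_id list_update_overwrite)

lemma act_loop_unit_raise:
  assumes v: "valid_idx n l m (xs, rs)" and p: "p < m" and j: "j \<in> {1..n*l}"
    and fresh: "\<forall>q<m. q \<noteq> p \<longrightarrow> xs!q \<noteq> j"
  shows "act n l m (loop_unit (xs!p) j (rs!p)) (tensor_basis (xs[p := j], rs[p := 0]))
    = tensor_basis (xs, rs)"
proof (rule ext, clarify)
  fix ys ss
  show "act n l m (loop_unit (xs!p) j (rs!p)) (tensor_basis (xs[p := j], rs[p := 0])) (ys, ss)
    = tensor_basis (xs, rs) (ys, ss)"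
  proof (cases "valid_idx n l m (ys, ss)")
    case False
    then show ?thesis using v by (auto simp: act_def tensor_basis_def)
  next
    case True
    have len: "length xs = m" "length rs = m" "length ys = m" "length ss = m"
      using v True by (auto simp: valid_idx_def)
    define C where "C q \<longleftrightarrow> ys!q = xs!p \<and> rs!p \<le> ss!q \<and>
      (xs[p := j], rs[p := 0]) = (ys[q := j], ss[q := ss!q - rs!p])" for q
    have no_other_factor: "\<not> C q" if "q < m" "q \<noteq> p" for q
    proof
      assume "C q"
      then have "xs[p := j] ! q = ys[q := j] ! q" by (simp add: C_def)
      then show False using that fresh len by simp
    qed
    have "act n l m (loop_unit (xs!p) j (rs!p)) (tensor_basis (xs[p := j], rs[p := 0])) (ys, ss)
        = (\<Sum>q<m. if C q then 1 else 0)"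
      unfolding C_def by (rule act_loop_unit_tensor_basis[OF True j])
    also have "\<dots> = (\<Sum>q<m. if q = p then if C p then 1 else 0 else 0 :: complex)"
      using no_other_factor by (intro sum.cong) auto
    also have "\<dots> = (if C p then 1 else 0)" using p by simp
    also have "C p \<longleftrightarrow> (ys, ss) = (xs, rs)"
    proof
      assume c: "C p"
      then have "ss!p - rs!p = 0" using p len by (metis C_def nth_list_update_eq prod.inject)
      then have "ss!p = rs!p" using c by (simp add: C_def)
      with c show "(ys, ss) = (xs, rs)"
        by (auto simp: C_def intro: list_update_cancel[symmetric])
    qed (simp add: C_def)
    finally show ?thesis by (simp add: tensor_basis_def)
  qed
qed

lemma act_in_Wtens:
  assumes X: "finite {(i, j, k). X i j k \<noteq> 0}" and f: "f \<in> Wtens n l m"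
  shows "act n l m X f \<in> Wtens n l m"
proof -
  define SX where "SX = {(i, j, k). X i j k \<noteq> 0}"
  define SF where "SF = {x. f x \<noteq> 0}"
  define raise :: "(nat list \<times> nat list) \<times> nat \<times> nat \<times> nat \<times> nat \<Rightarrow> nat list \<times> nat list"
    where "raise = (\<lambda>((ys, ss), p, i, j, k). (ys[p := i], ss[p := ss!p + k]))"
  have "{x. act n l m X f x \<noteq> 0} \<subseteq> raise ` (SF \<times> {..<m} \<times> SX)"
  proof clarify
    fix xs rs assume nz: "act n l m X f (xs, rs) \<noteq> 0"
    then have v: "valid_idx n l m (xs, rs)" by (simp add: act_def split: if_splits)
    with nz obtain p j k where p: "p < m" and k: "k \<le> rs!p"
      and "X (xs!p) j k * f (xs[p := j], rs[p := rs!p - k]) \<noteq> 0"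
      by (auto simp: act_def elim!: sum.not_neutral_contains_not_neutral)
    then have "((xs[p := j], rs[p := rs!p - k]), p, xs!p, j, k) \<in> SF \<times> {..<m} \<times> SX"
      by (simp add: SF_def SX_def)
    moreover have "raise ((xs[p := j], rs[p := rs!p - k]), p, xs!p, j, k) = (xs, rs)"
      using v p k by (simp add: raise_def valid_idx_def)
    ultimately show "(xs, rs) \<in> raise ` (SF \<times> {..<m} \<times> SX)" by (metis image_eqI)
  qed
  moreover have "finite (raise ` (SF \<times> {..<m} \<times> SX))"
    using X f by (simp add: SX_def SF_def Wtens_def)
  ultimately have "finite {x. act n l m X f x \<noteq> 0}" by (rule finite_subset)
  moreover have "\<forall>x. act n l m X f x \<noteq> 0 \<longrightarrow> valid_idx n l m x"
    by (auto simp: act_def split: if_splits)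
  ultimately show ?thesis unfolding Wtens_def by blast
qed

lemma gen_submod_subset_Wtens: "gen_submod n l m \<subseteq> Wtens n l m"
proof
  fix f assume "f \<in> gen_submod n l m"
  then show "f \<in> Wtens n l m"
  proof (induction rule: gen_submod.induct)
    case (gen f)
    then show ?case by (simp add: Vtens_def)
  next
    case zero
    then show ?case by (simp add: Wtens_def)
  next
    case (add f g)
    have "{x. f x + g x \<noteq> 0} \<subseteq> {x. f x \<noteq> 0} \<union> {x. g x \<noteq> 0}" by auto
    with add show ?case unfolding Wtens_def by (auto intro: finite_subset)
  next
    case (smult f c)
    have "{x. c * f x \<noteq> 0} \<subseteq> {x. f x \<noteq> 0}" by auto
    with smult show ?case unfolding Wtens_def by (auto intro: finite_subset)
  next
    case (act X f)
    then show ?case by (auto simp: palg_def loop_gl_def intro: act_in_Wtens)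
  qed
qed

lemma exists_raising_loop_unit:
  assumes "l > 0" and "m \<le> n" and "valid_idx n l m (xs, rs)" and "p < m"
  shows "\<exists>j \<in> {1..n*l}. (\<forall>q<m. q \<noteq> p \<longrightarrow> xs!q \<noteq> j) \<and> loop_unit (xs!p) j (rs!p) \<in> palg n l"
proof -
  have len: "length xs = m" and xs_range: "set xs \<subseteq> {1..n*l}"
    using assms(3) by (auto simp: valid_idx_def)
  obtain t where t: "1 \<le> t" "t \<le> l" and t_mod: "(blk n (xs!p) + int (rs!p) - int t) mod int l = 0"
    using exists_residue_representative[OF assms(1), of "blk n (xs!p) + int (rs!p)"] by auto
  define A where "A = (\<lambda>q. xs!q) ` ({..<m} - {p})"
  have "card A \<le> m - 1"
    using card_image_le[of "{..<m} - {p}" "\<lambda>q. xs!q"] assms(4) by (simp add: A_def)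
  then have "card A < n" using assms(2,4) by linarith
  then obtain j where j: "j \<in> {1..n*l}" "j \<notin> A" "blk n j = int t"
    using exists_index_in_block_avoiding[of n A t l] t by (auto simp: A_def)
  have "xs!p \<in> {1..n*l}" using xs_range assms(4) len by (auto simp: set_conv_nth)
  then have "loop_unit (xs!p) j (rs!p) \<in> palg n l"
    using j(1,3) t_mod by (intro loop_unit_in_palg) (simp_all add: algebra_simps)
  moreover have "\<forall>q<m. q \<noteq> p \<longrightarrow> xs!q \<noteq> j" using j(2) by (auto simp: A_def)
  ultimately show ?thesis using j(1) by blast
qed

lemma tensor_basis_in_gen_submod:
  assumes "l > 0" and "m \<le> n" and "valid_idx n l m (xs, rs)"
  shows "tensor_basis (xs, rs) \<in> gen_submod n l m"
  using assms(3)
proof (induction "sum_list rs" arbitrary: xs rs rule: less_induct)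
  case less
  have len: "length rs = m" using less.prems by (simp add: valid_idx_def)
  show ?case
  proof (cases "rs = replicate m 0")
    case True
    have "{x. tensor_basis (xs, rs) x \<noteq> 0} = {(xs, rs)}" by (auto simp: tensor_basis_def)
    then have "tensor_basis (xs, rs) \<in> Vtens n l m"
      using True less.prems by (auto simp: Vtens_def Wtens_def tensor_basis_def)
    then show ?thesis by (rule gen_submod.gen)
  next
    case False
    then obtain p where p: "p < m" and rp: "rs!p \<noteq> 0"
      using len by (auto simp: list_eq_iff_nth_eq)
    obtain j where j: "j \<in> {1..n*l}" and fresh: "\<forall>q<m. q \<noteq> p \<longrightarrow> xs!q \<noteq> j"
      and unit: "loop_unit (xs!p) j (rs!p) \<in> palg n l"
      using exists_raising_loop_unit[OF assms(1,2) less.prems p] by blast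
    have "sum_list (rs[p := 0]) < sum_list rs"
      using p len rp elem_le_sum_list[of p rs] by (simp add: sum_list_update)
    moreover have "valid_idx n l m (xs[p := j], rs[p := 0])"
      using less.prems j set_update_subset_insert[of xs p j] by (auto simp: valid_idx_def)
    ultimately have "tensor_basis (xs[p := j], rs[p := 0]) \<in> gen_submod n l m"
      by (rule less.hyps)
    then have "act n l m (loop_unit (xs!p) j (rs!p)) (tensor_basis (xs[p := j], rs[p := 0]))
        \<in> gen_submod n l m"
      by (rule gen_submod.act[OF unit])
    then show ?thesis by (simp only: act_loop_unit_raise[OF less.prems p j fresh])
  qed
qed

lemma gen_submod_sum:
  assumes "finite S" and "\<And>x. x \<in> S \<Longrightarrow> g x \<in> gen_submod n l m"
  shows "(\<lambda>y. \<Sum>x\<in>S. g x y) \<in> gen_submod n l m"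
  using assms
proof (induction S rule: finite_induct)
  case empty
  then show ?case by (simp add: gen_submod.zero)
next
  case (insert x S)
  then show ?case using gen_submod.add[of "g x" n l m "\<lambda>y. \<Sum>x\<in>S. g x y"] by simp
qed

lemma Wtens_eq_sum_tensor_basis:
  assumes "f \<in> Wtens n l m"
  shows "f = (\<lambda>y. \<Sum>x\<in>{x. f x \<noteq> 0}. f x * tensor_basis x y)"
proof
  fix y
  have "finite {x. f x \<noteq> 0}" using assms by (simp add: Wtens_def)
  then show "f y = (\<Sum>x\<in>{x. f x \<noteq> 0}. f x * tensor_basis x y)"
    by (simp add: tensor_basis_def if_distrib[of "\<lambda>c. _ * c"] cong: if_cong)
qed

theorem proposition2p3:
  fixes n l m :: nat
  assumes "l > 1" and "n \<ge> m" and "m \<ge> 1"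
  shows "gen_submod n l m = Wtens n l m"
proof
  show "gen_submod n l m \<subseteq> Wtens n l m" by (rule gen_submod_subset_Wtens)
  show "Wtens n l m \<subseteq> gen_submod n l m"
  proof
    fix f assume f: "f \<in> Wtens n l m"
    have "tensor_basis x \<in> gen_submod n l m" if "f x \<noteq> 0" for x
      using that f assms(1,2) by (cases x) (auto simp: Wtens_def intro: tensor_basis_in_gen_submod)
    then have "(\<lambda>y. \<Sum>x\<in>{x. f x \<noteq> 0}. f x * tensor_basis x y) \<in> gen_submod n l m"
      using f by (intro gen_submod_sum gen_submod.smult) (auto simp: Wtens_def)
    then show "f \<in> gen_submod n l m" using Wtens_eq_sum_tensor_basis[OF f] by simp
  qed
qed

end
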